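(* Let $r=a/b$ with $a,b$ coprime positive integers, and for $\theta\in\mathbb{R}$ define $\mathcal R_\theta^*f(z,t)=f(e^{i\theta}z,t)$. Then for $f\in C_c^\infty(\overline{\mathbb{H}})$ and $(z,t)\in\overline{\mathbb{H}}$, $$I_r(\mathcal R_\theta^*f)(z,t)=(I_rf)\big(e^{i\theta}z,\ t-\tfrac12 r\theta\big),$$ and consequently $$I_r(\partial_\theta f)(z,t)=\big(\partial_\theta-\tfrac12 rT\big)I_rf(z,t).$$
   Context: $\mathbb{H}=\mathbb{C}\times\mathbb{R}$ (coordinates $z=x+iy$, $t$) with product $(x+iy,t)(u+iv,s)=(x+u+i(y+v),\,t+s+\tfrac12(xv-yu))$; $\overline{\mathbb{H}}=\mathbb{H}/\{(0,k\pi):k\in\mathbb{Z}\}\cong\mathbb{C}\times(\mathbb{R}/\pi\mathbb{Z})$. For $r=a/b$, $\gamma_r(s)=(\sqrt r e^{is/\sqrt r},\tfrac12\sqrt r s)$ and $I_rf(z,t)=\int_0^{2\pi\sqrt{ab}}f((z,t)\gamma_r(s))\,ds$. $T=\partial_t$, and $\partial_\theta=x\partial_y-y\partial_x$ is the rotational derivative in the $z$ variable, i.e. $\partial_\theta f=\frac{d}{d\theta}\big|_{\theta=0}\mathcal R^*_\theta f$. *)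

theory Defs
  imports "HOL-Analysis.Analysis"
begin

coinductive smooth_map :: "('a::real_normed_vector \<Rightarrow> 'b::real_normed_vector) \<Rightarrow> bool" where
  "(\<forall>x. f differentiable (at x)) \<Longrightarrow>
   (\<forall>v. smooth_map (\<lambda>x. frechet_derivative f (at x) v)) \<Longrightarrow> smooth_map f"

definition heis_mult :: "complex \<times> real \<Rightarrow> complex \<times> real \<Rightarrow> complex \<times> real" where
  "heis_mult p q = (fst p + fst q,
     snd p + snd q + 1/2 * (Re (fst p) * Im (fst q) - Im (fst p) * Re (fst q)))"

definition gamma_r :: "real \<Rightarrow> real \<Rightarrow> complex \<times> real" where
  "gamma_r r s = (complex_of_real (sqrt r) * cis (s / sqrt r), 1/2 * sqrt r * s)"

text \<open>Functions on the quotient H-bar are pi-periodic functions of (z,t).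
C_c^infty(H-bar): smooth, pi-periodic in t, support bounded in z.\<close>
definition Cc_Hbar :: "(complex \<Rightarrow> real \<Rightarrow> complex) \<Rightarrow> bool" where
  "Cc_Hbar f \<longleftrightarrow> smooth_map (\<lambda>p::complex \<times> real. f (fst p) (snd p))
     \<and> (\<forall>z t. f z (t + pi) = f z t)
     \<and> (\<exists>R. \<forall>z t. R < cmod z \<longrightarrow> f z t = 0)"

definition I_op :: "nat \<Rightarrow> nat \<Rightarrow> (complex \<Rightarrow> real \<Rightarrow> complex) \<Rightarrow> complex \<Rightarrow> real \<Rightarrow> complex" where
  "I_op a b f z t = integral {0 .. 2 * pi * sqrt (real a * real b)}
     (\<lambda>s. let p = heis_mult (z, t) (gamma_r (real a / real b) s) in f (fst p) (snd p))"

definition rot :: "real \<Rightarrow> (complex \<Rightarrow> real \<Rightarrow> complex) \<Rightarrow> complex \<Rightarrow> real \<Rightarrow> complex" where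
  "rot \<theta> f z t = f (cis \<theta> * z) t"

definition dtheta :: "(complex \<Rightarrow> real \<Rightarrow> complex) \<Rightarrow> complex \<Rightarrow> real \<Rightarrow> complex" where
  "dtheta f z t = vector_derivative (\<lambda>\<theta>. rot \<theta> f z t) (at 0)"

definition Tder :: "(complex \<Rightarrow> real \<Rightarrow> complex) \<Rightarrow> complex \<Rightarrow> real \<Rightarrow> complex" where
  "Tder f z t = vector_derivative (\<lambda>s. f z s) (at t)"

end

theory Submission
  imports Defs
begin

text \<open>
  Rotations \<open>(z, t) \<mapsto> (e\<^sup>i\<^sup>\<theta> z, t)\<close> are automorphisms of the Heisenberg group, and rotating
  the curve \<open>\<gamma>\<^sub>r\<close> by \<open>\<theta>\<close> amounts to shifting its parameter by \<open>\<surd>r \<theta>\<close> and its central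
  coordinate by \<open>r \<theta> / 2\<close>. Because \<open>f\<close> is \<open>\<pi>\<close>-periodic in \<open>t\<close>, the integrand
  \<open>s \<mapsto> f ((z, t) \<gamma>\<^sub>r(s))\<close> is periodic with period \<open>2\<pi>\<surd>(ab)\<close>, the length of the
  integration interval, so the shift of the parameter does not change the integral; this gives
  the first identity. Differentiating it at \<open>\<theta> = 0\<close>, under the integral sign on both sides,
  gives the second.
\<close>

section \<open>Smooth maps\<close>

lemma smooth_map_has_derivative:
  assumes "smooth_map F"
  shows "(F has_derivative frechet_derivative F (at x)) (at x)"
  using assms by (cases rule: smooth_map.cases) (simp add: frechet_derivative_works)

lemma smooth_map_frechet_derivative:
  assumes "smooth_map F"
  shows "smooth_map (\<lambda>x. frechet_derivative F (at x) v)"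
  using assms by (cases rule: smooth_map.cases) simp

lemma linear_frechet_derivative_smooth_map:
  assumes "smooth_map F"
  shows "linear (frechet_derivative F (at x))"
  using smooth_map_has_derivative[OF assms] by (rule has_derivative_linear)

lemma smooth_map_continuous_on:
  assumes "smooth_map F"
  shows "continuous_on S F"
  using smooth_map_has_derivative[OF assms]
  by (meson continuous_at_imp_continuous_on has_derivative_continuous)

lemma continuous_on_frechet_derivative_smooth_map:
  fixes F :: "'a::euclidean_space \<Rightarrow> 'b::real_normed_vector"
  assumes "smooth_map F" "continuous_on S P" "continuous_on S V"
  shows "continuous_on S (\<lambda>x. frechet_derivative F (at (P x)) (V x))"
proof -
  have "frechet_derivative F (at (P x)) (V x) =
          (\<Sum>i\<in>Basis. (V x \<bullet> i) *\<^sub>R frechet_derivative F (at (P x)) i)" for x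
  proof -
    interpret linear "frechet_derivative F (at (P x))"
      by (rule linear_frechet_derivative_smooth_map[OF assms(1)])
    show ?thesis
      by (subst euclidean_representation[of "V x", symmetric]) (simp only: sum scale)
  qed
  moreover have "continuous_on S (\<lambda>x. frechet_derivative F (at (P x)) i)" for i
    using continuous_on_compose2[OF
        smooth_map_continuous_on[OF smooth_map_frechet_derivative[OF assms(1)]] assms(2)]
    by blast
  ultimately show ?thesis
    by (simp only:) (intro continuous_intros assms(3))
qed

lemma smooth_map_has_vector_derivative_comp:
  assumes "smooth_map F" "(P has_vector_derivative v) (at x within S)"
  shows "((\<lambda>y. F (P y)) has_vector_derivative frechet_derivative F (at (P x)) v) (at x within S)"
proof -
  interpret linear "frechet_derivative F (at (P x))"
    by (rule linear_frechet_derivative_smooth_map[OF assms(1)])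
  show ?thesis
    using has_derivative_compose[OF assms(2)[unfolded has_vector_derivative_def]
        smooth_map_has_derivative[OF assms(1)]]
    by (simp add: has_vector_derivative_def scale o_def)
qed

lemma has_vector_derivative_integral_smooth_comp:
  fixes F :: "'a::euclidean_space \<Rightarrow> 'b::banach" and P P' :: "real \<Rightarrow> real \<Rightarrow> 'a"
  assumes "smooth_map F"
    and "\<And>x s. ((\<lambda>x. P x s) has_vector_derivative P' x s) (at x)"
    and "continuous_on UNIV (\<lambda>(x, s). P x s)" "continuous_on UNIV (\<lambda>(x, s). P' x s)"
  shows "((\<lambda>x. integral {a..b} (\<lambda>s. F (P x s))) has_vector_derivative
           integral {a..b} (\<lambda>s. frechet_derivative F (at (P x s)) (P' x s))) (at x)"
proof -
  have "continuous_on UNIV (\<lambda>s. P x s)" for x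
    using continuous_on_compose2[OF assms(3) continuous_on_Pair[OF continuous_on_const continuous_on_id]]
    by simp
  then have cont_FP: "continuous_on UNIV (\<lambda>s. F (P x s))" for x
    by (rule continuous_on_compose2[OF smooth_map_continuous_on[OF assms(1)], where t=UNIV]) simp_all
  have "((\<lambda>x. integral (cbox a b) (\<lambda>s. F (P x s))) has_vector_derivative
           integral (cbox a b) (\<lambda>s. frechet_derivative F (at (P x s)) (P' x s))) (at x within UNIV)"
  proof (rule leibniz_rule_vector_derivative)
    show "((\<lambda>x. F (P x s)) has_vector_derivative frechet_derivative F (at (P x s)) (P' x s))
            (at x within UNIV)" for x s
      by (rule smooth_map_has_vector_derivative_comp[OF assms(1,2)])
    show "(\<lambda>s. F (P x s)) integrable_on cbox a b" for x
      by (rule integrable_continuous continuous_on_subset[OF cont_FP])+ simp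
    show "continuous_on (UNIV \<times> cbox a b) (\<lambda>(x, s). frechet_derivative F (at (P x s)) (P' x s))"
      using continuous_on_frechet_derivative_smooth_map[OF assms(1,3,4)]
      by (auto simp: case_prod_beta' intro: continuous_on_subset)
  qed auto
  then show ?thesis by simp
qed

section \<open>Integrals of periodic functions\<close>

lemma integral_has_vector_derivative_upper:
  fixes g :: "real \<Rightarrow> 'a::banach"
  assumes "continuous_on UNIV g" "a < u"
  shows "((\<lambda>v. integral {a..v} g) has_vector_derivative g u) (at u)"
proof -
  have "((\<lambda>v. integral {a..v} g) has_vector_derivative g u) (at u within {a..u + 1})"
    using assms by (intro integral_has_vector_derivative continuous_on_subset[OF assms(1)]) auto
  moreover have "at u within {a..u + 1} = at u"
    using assms by (intro at_within_interior) auto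
  ultimately show ?thesis
    by simp
qed

lemma integral_periodic_shift:
  fixes g :: "real \<Rightarrow> 'a::banach"
  assumes "continuous_on UNIV g" "\<And>u. g (u + L) = g u" "0 \<le> L"
  shows "integral {x..x + L} g = integral {0..L} g"
proof -
  have deriv: "((\<lambda>y. integral {y..y + L} g) has_vector_derivative 0) (at y)" for y
  proof -
    have "((\<lambda>v. v + L) has_vector_derivative 1) (at y)"
      by (auto intro!: derivative_eq_intros)
    from vector_diff_chain_at[OF this integral_has_vector_derivative_upper[OF assms(1)]]
    have "((\<lambda>v. integral {y - 1..v + L} g) has_vector_derivative g (y + L)) (at y)"
      using assms(3) by (simp add: o_def)
    then have "((\<lambda>v. integral {y - 1..v + L} g - integral {y - 1..v} g) has_vector_derivative 0) (at y)"
      using has_vector_derivative_diff[OF _ integral_has_vector_derivative_upper[OF assms(1)]] assms(2)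
      by fastforce
    then show ?thesis
    proof (rule has_vector_derivative_transform_within_open[where S="ball y 1"])
      fix v
      assume "v \<in> ball y 1"
      then have "y - 1 \<le> v"
        by (auto simp: dist_real_def)
      then show "integral {y - 1..v + L} g - integral {y - 1..v} g = integral {v..v + L} g"
        using assms(3) Henstock_Kurzweil_Integration.integral_combine[where a="y - 1" and c=v and b="v + L" and f=g]
          integrable_continuous_interval[OF continuous_on_subset[OF assms(1)]]
        by (auto simp: algebra_simps)
    qed auto
  qed
  obtain c where c: "\<And>y. integral {y..y + L} g = c"
    by (rule has_vector_derivative_zero_constant[OF convex_UNIV, of "\<lambda>y. integral {y..y + L} g"])
      (use deriv in auto)
  have "integral {x..x + L} g = integral {0..0 + L} g"
    unfolding c ..
  then show ?thesis
    by simp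
qed

lemma periodic_nat_multiple:
  assumes "\<And>t. f (t + pi) = f t"
  shows "f (t + real n * pi) = f t"
proof (induction n)
  case (Suc n)
  then show ?case
    using assms[of "t + real n * pi"] by (simp add: algebra_simps)
qed simp

section \<open>The Heisenberg group and the curve \<open>\<gamma>\<^sub>r\<close>\<close>

lemma heis_mult_conv:
  "heis_mult p q = (fst p + fst q, snd p + snd q + Im (cnj (fst p) * fst q) / 2)"
  by (simp add: heis_mult_def prod_eq_iff field_simps)

text \<open>Since \<open>heis_mult p q = heis_right_diff q p + q\<close>, this is the differential of the right
  translation \<open>p \<mapsto> p q\<close>.\<close>

definition heis_right_diff :: "complex \<times> real \<Rightarrow> complex \<times> real \<Rightarrow> complex \<times> real" where
  "heis_right_diff q h = (fst h, snd h + Im (cnj (fst h) * fst q) / 2)"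

lemma bounded_linear_heis_right_diff: "bounded_linear (heis_right_diff q)"
  unfolding linear_conv_bounded_linear[symmetric]
  by (rule linearI) (auto simp: heis_right_diff_def prod_eq_iff field_simps)

lemma heis_mult_has_vector_derivative:
  assumes "(p has_vector_derivative p') F"
  shows "((\<lambda>x. heis_mult (p x) q) has_vector_derivative heis_right_diff q p') F"
proof -
  have "heis_mult (p x) q = heis_right_diff q (p x) + q" for x
    by (simp add: heis_mult_conv heis_right_diff_def prod_eq_iff)
  moreover have "((\<lambda>x. heis_right_diff q (p x)) has_vector_derivative heis_right_diff q p') F"
    by (rule bounded_linear.has_vector_derivative[OF bounded_linear_heis_right_diff assms])
  ultimately show ?thesis
    by (simp add: has_vector_derivative_add_const)
qed

lemma heis_mult_rotate_shift:
  "heis_mult (cis \<theta> * z, t - c) (cis \<theta> * w, u + c) =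
     (cis \<theta> * fst (heis_mult (z, t) (w, u)), snd (heis_mult (z, t) (w, u)))"
proof -
  have "cnj (cis \<theta> * z) * (cis \<theta> * w) = (cis (- \<theta>) * cis \<theta>) * (cnj z * w)"
    by (simp only: complex_cnj_mult cis_cnj ac_simps)
  also have "\<dots> = cnj z * w"
    by (simp add: cis_mult)
  finally have "Im (cnj (cis \<theta> * z) * (cis \<theta> * w)) = Im (cnj z * w)"
    by (rule arg_cong)
  then show ?thesis
    unfolding heis_mult_conv fst_conv snd_conv by (simp add: distrib_left)
qed

lemma gamma_r_shift:
  assumes "0 < r"
  shows "gamma_r r (s + sqrt r * \<theta>) = (cis \<theta> * fst (gamma_r r s), snd (gamma_r r s) + r / 2 * \<theta>)"
proof -
  have "(s + sqrt r * \<theta>) / sqrt r = \<theta> + s / sqrt r"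
    using assms by (simp add: field_simps)
  then show ?thesis
    using assms by (simp add: gamma_r_def cis_mult algebra_simps flip: power2_eq_square)
qed

lemma gamma_r_period:
  assumes "0 < a" "0 < b"
  shows "gamma_r (real a / real b) (s + 2 * pi * sqrt (real a * real b)) =
           (fst (gamma_r (real a / real b) s), snd (gamma_r (real a / real b) s) + real a * pi)"
proof -
  have "sqrt (real a * real b) = sqrt (real a / real b * (real b)\<^sup>2)"
    using assms by (simp add: power2_eq_square)
  also have "\<dots> = sqrt (real a / real b) * real b"
    by (simp only: real_sqrt_mult real_sqrt_abs abs_of_nat)
  finally have period: "2 * pi * sqrt (real a * real b) = sqrt (real a / real b) * (2 * pi * real b)"
    by simp
  have "cis (2 * pi * real b) = 1"
    by (rule cis_multiple_2pi) simp
  moreover have "real a / real b / 2 * (2 * pi * real b) = real a * pi"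
    using assms by simp
  ultimately show ?thesis
    using assms gamma_r_shift[of "real a / real b" s "2 * pi * real b"] by (simp only: period) simp
qed

lemma continuous_on_gamma_r: "continuous_on S (gamma_r r)"
  unfolding gamma_r_def divide_inverse by (intro continuous_intros)

section \<open>The operator \<open>I\<^sub>r\<close>\<close>

lemma I_op_eq:
  "I_op a b g z t = integral {0..2 * pi * sqrt (real a * real b)}
     (\<lambda>s. case_prod g (heis_mult (z, t) (gamma_r (real a / real b) s)))"
  by (simp add: I_op_def Let_def case_prod_beta)

lemma I_op_rot:
  assumes "0 < a" "0 < b" "continuous_on UNIV (case_prod f)" "\<And>z t. f z (t + pi) = f z t"
  shows "I_op a b (rot \<theta> f) z t = I_op a b f (cis \<theta> * z) (t - 1/2 * (real a / real b) * \<theta>)"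
proof -
  define r where "r = real a / real b"
  define L where "L = 2 * pi * sqrt (real a * real b)"
  define g where "g s = case_prod f (heis_mult (cis \<theta> * z, t - 1/2 * r * \<theta>) (gamma_r r s))" for s
  have "0 < r"
    using assms by (simp add: r_def)
  have rot_eq: "case_prod (rot \<theta> f) (heis_mult (z, t) (gamma_r r s)) = g (sqrt r * \<theta> + s)" for s
    using heis_mult_rotate_shift[of \<theta> z t "r / 2 * \<theta>" "fst (gamma_r r s)" "snd (gamma_r r s)"]
    by (simp add: g_def gamma_r_shift[OF \<open>0 < r\<close>] rot_def case_prod_beta add.commute)
  have "heis_mult p (gamma_r r (s + L)) =
          (fst (heis_mult p (gamma_r r s)), snd (heis_mult p (gamma_r r s)) + real a * pi)" for p s
    unfolding r_def L_def gamma_r_period[OF assms(1,2)] by (simp add: heis_mult_conv)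
  then have "g (s + L) = g s" for s
    using periodic_nat_multiple[of "f _", OF assms(4)] by (simp add: g_def case_prod_beta)
  moreover have "continuous_on UNIV g"
    unfolding g_def heis_mult_conv
    by (intro continuous_on_compose2[OF assms(3)] continuous_intros continuous_on_gamma_r) auto
  ultimately have periodic: "integral {sqrt r * \<theta>..sqrt r * \<theta> + L} g = integral {0..L} g"
    by (intro integral_periodic_shift) (auto simp: L_def)
  have "I_op a b (rot \<theta> f) z t = integral {0..L} (g \<circ> (+) (sqrt r * \<theta>))"
    unfolding I_op_eq r_def[symmetric] L_def[symmetric] rot_eq by (simp add: o_def)
  also have "\<dots> = integral {0..L} g"
    unfolding integral_shift_Icc_real using periodic by (simp add: add.commute)
  also have "\<dots> = I_op a b f (cis \<theta> * z) (t - 1/2 * (real a / real b) * \<theta>)"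
    by (simp only: I_op_eq g_def[abs_def] L_def r_def)
  finally show ?thesis .
qed

definition I_op_deriv ::
    "nat \<Rightarrow> nat \<Rightarrow> (complex \<Rightarrow> real \<Rightarrow> complex) \<Rightarrow> complex \<times> real \<Rightarrow> complex \<times> real \<Rightarrow> complex" where
  "I_op_deriv a b f p v = integral {0..2 * pi * sqrt (real a * real b)}
     (\<lambda>s. frechet_derivative (case_prod f) (at (heis_mult p (gamma_r (real a / real b) s)))
            (heis_right_diff (gamma_r (real a / real b) s) v))"

lemma I_op_has_vector_derivative:
  assumes "smooth_map (case_prod f)"
    and "\<And>x. (p has_vector_derivative p' x) (at x)" "continuous_on UNIV p'"
  shows "((\<lambda>x. I_op a b f (fst (p x)) (snd (p x))) has_vector_derivative I_op_deriv a b f (p x) (p' x)) (at x)"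
proof -
  have "continuous_on UNIV p"
    using assms(2) by (meson continuous_at_imp_continuous_on has_vector_derivative_continuous)
  note [continuous_intros] = continuous_on_compose2[OF this] continuous_on_compose2[OF assms(3)]
    continuous_on_compose2[OF continuous_on_gamma_r]
  show ?thesis
    unfolding I_op_eq I_op_deriv_def prod.collapse
  proof (rule has_vector_derivative_integral_smooth_comp[OF assms(1)])
    show "((\<lambda>x. heis_mult (p x) (gamma_r (real a / real b) s)) has_vector_derivative
            heis_right_diff (gamma_r (real a / real b) s) (p' x)) (at x)" for x s
      by (rule heis_mult_has_vector_derivative[OF assms(2)])
    show "continuous_on UNIV (\<lambda>(x, s). heis_mult (p x) (gamma_r (real a / real b) s))"
      unfolding heis_mult_conv case_prod_beta by (intro continuous_intros) auto
    show "continuous_on UNIV (\<lambda>(x, s). heis_right_diff (gamma_r (real a / real b) s) (p' x))"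
      unfolding heis_right_diff_def case_prod_beta by (intro continuous_intros) auto
  qed
qed

lemma linear_I_op_deriv:
  assumes "smooth_map (case_prod f)"
  shows "linear (I_op_deriv a b f p)"
proof -
  define \<gamma> where "\<gamma> = gamma_r (real a / real b)"
  define Df where "Df s v = frechet_derivative (case_prod f) (at (heis_mult p (\<gamma> s))) (heis_right_diff (\<gamma> s) v)"
    for s v
  have "linear (Df s)" for s
    using linear_compose[OF bounded_linear.linear[OF bounded_linear_heis_right_diff]
        linear_frechet_derivative_smooth_map[OF assms]]
    by (simp add: Df_def[abs_def] o_def)
  moreover have "(\<lambda>s. Df s v) integrable_on {0..2 * pi * sqrt (real a * real b)}" for v
    unfolding Df_def \<gamma>_def heis_mult_conv heis_right_diff_def
    by (intro integrable_continuous_interval continuous_on_frechet_derivative_smooth_map[OF assms]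
        continuous_intros continuous_on_compose2[OF continuous_on_gamma_r]) auto
  ultimately show ?thesis
    unfolding I_op_deriv_def \<gamma>_def[symmetric] Df_def[symmetric]
    by (intro linearI) (simp_all add: linear_add linear_cmul integral_add integrable_cmul)
qed

lemma dtheta_I_op:
  assumes "smooth_map (case_prod f)"
  shows "dtheta (I_op a b f) z t = I_op_deriv a b f (z, t) (\<i> * z, 0)"
proof -
  have rotation: "((\<lambda>\<theta>. (cis \<theta> * z, t)) has_vector_derivative (\<i> * cis \<theta> * z, 0)) (at \<theta>)" for \<theta>
    by (auto intro!: derivative_eq_intros ext simp: has_vector_derivative_def)
  have "continuous_on UNIV (\<lambda>\<theta>. (\<i> * cis \<theta> * z, 0))"
    by (intro continuous_intros)
  from I_op_has_vector_derivative[OF assms rotation this, of a b 0]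
  have "((\<lambda>\<theta>. I_op a b f (cis \<theta> * z) t) has_vector_derivative I_op_deriv a b f (z, t) (\<i> * z, 0)) (at 0)"
    by simp
  then show ?thesis
    by (simp add: dtheta_def rot_def vector_derivative_at)
qed

lemma Tder_I_op:
  assumes "smooth_map (case_prod f)"
  shows "Tder (I_op a b f) z t = I_op_deriv a b f (z, t) (0, 1)"
proof -
  have "((\<lambda>\<tau>. (z, \<tau>)) has_vector_derivative (0, 1)) (at \<tau>)" for \<tau>
    by (auto intro!: derivative_eq_intros simp: has_vector_derivative_def)
  from I_op_has_vector_derivative[OF assms this continuous_on_const, of a b t]
  have "((\<lambda>\<tau>. I_op a b f z \<tau>) has_vector_derivative I_op_deriv a b f (z, t) (0, 1)) (at t)"
    by simp
  then show ?thesis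
    by (simp add: Tder_def vector_derivative_at)
qed

lemma dtheta_eq_frechet_derivative:
  assumes "smooth_map (case_prod f)"
  shows "dtheta f w \<tau> = frechet_derivative (case_prod f) (at (w, \<tau>)) (\<i> * w, 0)"
proof -
  have "((\<lambda>\<theta>. (cis \<theta> * w, \<tau>)) has_vector_derivative (\<i> * w, 0)) (at 0)"
    by (auto intro!: derivative_eq_intros simp: has_vector_derivative_def)
  from smooth_map_has_vector_derivative_comp[OF assms this]
  show ?thesis
    by (simp add: dtheta_def rot_def vector_derivative_at)
qed

lemma I_op_rot_has_vector_derivative:
  assumes "smooth_map (case_prod f)"
  shows "((\<lambda>\<theta>. I_op a b (rot \<theta> f) z t) has_vector_derivative I_op a b (dtheta f) z t) (at 0)"
proof -
  define Q where "Q s = heis_mult (z, t) (gamma_r (real a / real b) s)" for s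
  have "continuous_on UNIV Q"
    unfolding Q_def heis_mult_conv by (intro continuous_intros continuous_on_gamma_r) auto
  note [continuous_intros] = continuous_on_compose2[OF this]
  have "((\<lambda>\<theta>. integral {0..2 * pi * sqrt (real a * real b)}
            (\<lambda>s. case_prod f (cis \<theta> * fst (Q s), snd (Q s))))
          has_vector_derivative integral {0..2 * pi * sqrt (real a * real b)}
            (\<lambda>s. frechet_derivative (case_prod f) (at (cis 0 * fst (Q s), snd (Q s)))
                   (\<i> * cis 0 * fst (Q s), 0))) (at 0)"
  proof (rule has_vector_derivative_integral_smooth_comp[OF assms,
        where P'="\<lambda>\<theta> s. (\<i> * cis \<theta> * fst (Q s), 0)"])
    show "((\<lambda>\<theta>. (cis \<theta> * fst (Q s), snd (Q s))) has_vector_derivative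
            (\<i> * cis \<theta> * fst (Q s), 0)) (at \<theta>)" for \<theta> s
      by (auto intro!: derivative_eq_intros simp: has_vector_derivative_def)
  qed (auto simp: case_prod_beta intro!: continuous_intros)
  then show ?thesis
    by (simp add: I_op_eq rot_def dtheta_eq_frechet_derivative[OF assms] Q_def case_prod_beta)
qed

lemma I_op_dtheta:
  assumes "0 < a" "0 < b" "smooth_map (case_prod f)" "\<And>z t. f z (t + pi) = f z t"
  shows "I_op a b (dtheta f) z t
           = dtheta (I_op a b f) z t - complex_of_real (1/2 * (real a / real b)) * Tder (I_op a b f) z t"
proof -
  define r where "r = real a / real b"
  have curve: "((\<lambda>\<theta>. (cis \<theta> * z, t - 1/2 * r * \<theta>)) has_vector_derivative (\<i> * cis \<theta> * z, - r / 2)) (at \<theta>)"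
    for \<theta>
    by (auto intro!: derivative_eq_intros ext simp: has_vector_derivative_def algebra_simps)
  have "continuous_on UNIV (\<lambda>\<theta>. (\<i> * cis \<theta> * z, - r / 2))"
    by (intro continuous_intros)
  from I_op_has_vector_derivative[OF assms(3) curve this, of a b 0]
  have "((\<lambda>\<theta>. I_op a b f (cis \<theta> * z) (t - 1/2 * r * \<theta>)) has_vector_derivative
          I_op_deriv a b f (z, t) (\<i> * z, - r / 2)) (at 0)"
    by simp
  moreover have "((\<lambda>\<theta>. I_op a b f (cis \<theta> * z) (t - 1/2 * r * \<theta>)) has_vector_derivative
                   I_op a b (dtheta f) z t) (at 0)"
    unfolding r_def I_op_rot[OF assms(1,2) smooth_map_continuous_on[OF assms(3)] assms(4), symmetric]
    by (rule I_op_rot_has_vector_derivative[OF assms(3)])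
  ultimately have "I_op a b (dtheta f) z t = I_op_deriv a b f (z, t) (\<i> * z, - r / 2)"
    by (rule vector_derivative_unique_at[symmetric])
  also have "\<dots> = I_op_deriv a b f (z, t) ((\<i> * z, 0) - (r / 2) *\<^sub>R (0, 1))"
    by simp
  also have "\<dots> = I_op_deriv a b f (z, t) (\<i> * z, 0) - (r / 2) *\<^sub>R I_op_deriv a b f (z, t) (0, 1)"
    using linear_I_op_deriv[OF assms(3)] by (simp only: linear_diff linear_cmul)
  finally show ?thesis
    by (simp add: dtheta_I_op[OF assms(3)] Tder_I_op[OF assms(3)] r_def scaleR_conv_of_real)
qed

theorem mainTheorem11:
  fixes a b :: nat and f :: "complex \<Rightarrow> real \<Rightarrow> complex"
  assumes "0 < a" "0 < b" "coprime a b" "Cc_Hbar f"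
  shows "(\<forall>\<theta> z t. I_op a b (rot \<theta> f) z t
            = I_op a b f (cis \<theta> * z) (t - 1/2 * (real a / real b) * \<theta>))
       \<and> (\<forall>z t. I_op a b (dtheta f) z t
            = dtheta (I_op a b f) z t - complex_of_real (1/2 * (real a / real b)) * Tder (I_op a b f) z t)"
proof -
  have smooth: "smooth_map (case_prod f)" and periodic: "\<And>z t. f z (t + pi) = f z t"
    using assms(4) by (simp_all add: Cc_Hbar_def case_prod_beta')
  show ?thesis
    using I_op_rot[OF assms(1,2) smooth_map_continuous_on[OF smooth] periodic]
      I_op_dtheta[OF assms(1,2) smooth periodic]
    by blast
qed

end
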